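(* Let $1\le r\le m\le n$ and $k\ge 1$. Let $Z_1\subseteq\mathcal Z^{m,n}_{r,k}$ be the closed subvariety of points at which all $x^{(0)}_{i,j}$ ($1\le i\le m$, $1\le j\le n$) vanish. If $k\le r$, then $Z_1$ is exactly the linear subspace $\{x^{(0)}_{i,j}=0 \ \forall i,j\}\cong\mathbf A^{mn(k-1)}$ (the coordinates of degrees $1,\dots,k-1$ being arbitrary). If $k>r$, then $Z_1\cong \mathcal Z^{m,n}_{r,k-r}\times\mathbf A^{mn(r-1)}$, via the map sending a point of $Z_1$ to the pair consisting of its coordinates $x^{(l)}_{i,j}$ with $1\le l\le k-r$ (regarded as the coordinates $x^{(l-1)}_{i,j}$ of a point of $\mathcal Z^{m,n}_{r,k-r}$) and its coordinates $x^{(l)}_{i,j}$ with $k-r<l\le k-1$.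
   Context: Let $F$ be an algebraically closed field. For integers $1\le r\le m\le n$ and $k\ge 1$, let $S=F[x^{(l)}_{i,j}:1\le i\le m,\ 1\le j\le n,\ 0\le l\le k-1]$, the coordinate ring of $\mathbf A^{mnk}_F$, and let $X(t)$ be the $m\times n$ matrix over $S[t]/(t^k)$ with $(i,j)$ entry $x_{i,j}(t)=\sum_{l=0}^{k-1}x^{(l)}_{i,j}t^l$. Every element of $S[t]/(t^k)$ is uniquely $\sum_{l=0}^{k-1}c_lt^l$ with $c_l\in S$ (its coefficient of $t^l$). $\mathcal I^{m,n}_{r,k}\subseteq S$ is the ideal generated by the coefficients of $t^l$, $0\le l\le k-1$, of all $r\times r$ minors of $X(t)$, and $\mathcal Z^{m,n}_{r,k}\subseteq\mathbf A^{mnk}_F$ is its zero set. The variable $x^{(l)}_{i,j}$ is said to have degree $l$. *)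

theory Defs
  imports "HOL-Computational_Algebra.Polynomial" "Jordan_Normal_Form.Determinant"
    "Jordan_Normal_Form.DL_Submatrix"
begin

text \<open>A point of the affine space A^{mnk} over F is a coordinate function
  x l i j = value of x^{(l)}_{i,j}, with indices 0 <= l < k, 0 <= i < m, 0 <= j < n
  (rows and columns are indexed from 0), all other values being 0.\<close>

definition jet_points :: "nat \<Rightarrow> nat \<Rightarrow> nat \<Rightarrow> (nat \<Rightarrow> nat \<Rightarrow> nat \<Rightarrow> 'a::zero) set" where
  "jet_points m n k = {x. \<forall>l i j. x l i j \<noteq> 0 \<longrightarrow> l < k \<and> i < m \<and> j < n}"

definition jet_matrix :: "nat \<Rightarrow> nat \<Rightarrow> nat \<Rightarrow> (nat \<Rightarrow> nat \<Rightarrow> nat \<Rightarrow> 'a::comm_ring_1) \<Rightarrow> 'a poly mat" where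
  "jet_matrix m n k x = mat m n (\<lambda>(i,j). \<Sum>l<k. monom (x l i j) l)"

text \<open>Since evaluation at a point is a ring
  homomorphism S[t]/(t^k) -> F[t]/(t^k), this coefficient evaluated at x is the
  coefficient of t^l (l<k) of the corresponding minor of jet_matrix.\<close>

definition jet_zero_set :: "nat \<Rightarrow> nat \<Rightarrow> nat \<Rightarrow> nat \<Rightarrow> (nat \<Rightarrow> nat \<Rightarrow> nat \<Rightarrow> 'a::comm_ring_1) set" where
  "jet_zero_set m n r k = {x \<in> jet_points m n k.
     \<forall>I J l. I \<subseteq> {..<m} \<longrightarrow> J \<subseteq> {..<n} \<longrightarrow> card I = r \<longrightarrow> card J = r \<longrightarrow> l < k \<longrightarrow>
       coeff (det (submatrix (jet_matrix m n k x) I J)) l = 0}"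

definition jet_Z1 :: "nat \<Rightarrow> nat \<Rightarrow> nat \<Rightarrow> nat \<Rightarrow> (nat \<Rightarrow> nat \<Rightarrow> nat \<Rightarrow> 'a::comm_ring_1) set" where
  "jet_Z1 m n r k = {x \<in> jet_zero_set m n r k. \<forall>i<m. \<forall>j<n. x 0 i j = 0}"

text \<open>Points with coordinates supported on degrees in a set L (e.g. A^{mn(r-1)}
  realized with degrees k-r < l <= k-1).\<close>

definition coord_space :: "nat \<Rightarrow> nat \<Rightarrow> nat set \<Rightarrow> (nat \<Rightarrow> nat \<Rightarrow> nat \<Rightarrow> 'a::zero) set" where
  "coord_space m n L = {y. \<forall>l i j. y l i j \<noteq> 0 \<longrightarrow> l \<in> L \<and> i < m \<and> j < n}"

definition Z1_split :: "nat \<Rightarrow> nat \<Rightarrow> (nat \<Rightarrow> nat \<Rightarrow> nat \<Rightarrow> 'a::zero)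
    \<Rightarrow> (nat \<Rightarrow> nat \<Rightarrow> nat \<Rightarrow> 'a) \<times> (nat \<Rightarrow> nat \<Rightarrow> nat \<Rightarrow> 'a)" where
  "Z1_split r k x =
    ((\<lambda>l i j. if l < k - r then x (Suc l) i j else 0),
     (\<lambda>l i j. if k - r < l \<and> l \<le> k - 1 then x l i j else 0))"

end

theory Submission imports Defs begin

(* If all x^(0)_ij vanish then X(t) = t Y(t), where Y(t) has the entries
   x^(1)_ij + x^(2)_ij t + ..., so every r x r minor of X(t) is t^r times the
   corresponding minor of Y(t). Hence the coefficients of t^0, ..., t^(k-1) of the
   minors of X(t) vanish iff the coefficients of t^0, ..., t^(k-r-1) of the minors
   of Y(t) vanish; these depend only on Y(t) mod t^(k-r), i.e. on the coordinates of
   degrees 1, ..., k - r, while the coordinates of higher degree are unconstrained. *)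

lemma prod_diff_dvd:
  fixes d :: "'b::comm_ring_1"
  assumes "finite S" "\<And>i. i \<in> S \<Longrightarrow> d dvd f i - g i"
  shows "d dvd prod f S - prod g S"
  using assms
proof (induction S rule: finite_induct)
  case empty
  then show ?case by simp
next
  case (insert a S)
  have "prod f (insert a S) - prod g (insert a S)
      = f a * (prod f S - prod g S) + (f a - g a) * prod g S"
    using insert.hyps by (simp add: algebra_simps)
  then show ?case using insert by simp
qed

lemma det_diff_dvd:
  fixes d :: "'b::comm_ring_1"
  assumes A: "A \<in> carrier_mat p q" and B: "B \<in> carrier_mat p q"
    and entries: "\<And>i j. i < p \<Longrightarrow> j < q \<Longrightarrow> d dvd A $$ (i, j) - B $$ (i, j)"
  shows "d dvd det A - det B"
proof (cases "p = q")
  case False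
  then show ?thesis using A B by (simp add: det_def)
next
  case True
  have "det A - det B = (\<Sum>\<pi>\<in>{\<pi>. \<pi> permutes {0..<p}}.
      signof \<pi> * ((\<Prod>i = 0..<p. A $$ (i, \<pi> i)) - (\<Prod>i = 0..<p. B $$ (i, \<pi> i))))"
    using A B True by (simp add: det_def' sum_subtractf[symmetric] algebra_simps)
  also have "d dvd \<dots>"
  proof (intro dvd_sum dvd_mult prod_diff_dvd)
    fix \<pi> i assume "\<pi> \<in> {\<pi>. \<pi> permutes {0..<p}}" "i \<in> {0..<p}"
    then show "d dvd A $$ (i, \<pi> i) - B $$ (i, \<pi> i)"
      using True permutes_in_image entries by fastforce
  qed simp
  finally show ?thesis .
qed

lemma det_submatrix_diff_dvd:
  fixes d :: "'b::comm_ring_1"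
  assumes "A \<in> carrier_mat p q" "B \<in> carrier_mat p q"
    and "\<And>i j. i < p \<Longrightarrow> j < q \<Longrightarrow> d dvd A $$ (i, j) - B $$ (i, j)"
  shows "d dvd det (submatrix A I J) - det (submatrix B I J)"
  by (rule det_diff_dvd[where p = "card {i. i < p \<and> i \<in> I}" and q = "card {j. j < q \<and> j \<in> J}"])
    (use assms in \<open>auto simp: dim_submatrix submatrix_index pick_le\<close>)

lemma coeff_eq_if_monom_dvd_diff:
  fixes p q :: "'b::comm_ring_1 poly"
  assumes "monom 1 N dvd p - q" "s < N"
  shows "coeff p s = coeff q s"
proof -
  from assms(1) obtain c where "p - q = monom 1 N * c" by (elim dvdE)
  then have "coeff (p - q) s = 0" using assms(2) by (simp add: coeff_monom_mult)
  then show ?thesis by simp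
qed

lemma monom_dvd_sum_monom_diff:
  fixes a :: "nat \<Rightarrow> 'b::comm_ring_1"
  assumes "N \<le> K"
  shows "monom 1 N dvd (\<Sum>l<K. monom (a l) l) - (\<Sum>l<N. monom (a l) l)"
proof -
  have "(\<Sum>l<K. monom (a l) l) = (\<Sum>l<N. monom (a l) l) + (\<Sum>l\<in>{N..<K}. monom (a l) l)"
    using assms by (simp add: lessThan_atLeast0 sum.atLeastLessThan_concat)
  moreover have "monom 1 N dvd (\<Sum>l\<in>{N..<K}. monom (a l) l)"
  proof (rule dvd_sum)
    fix l assume "l \<in> {N..<K}"
    then have "monom (a l) l = monom 1 N * monom (a l) (l - N)" by (simp add: mult_monom)
    then show "monom 1 N dvd monom (a l) l" by simp
  qed
  ultimately show ?thesis by simp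
qed

lemma jet_matrix_carrier: "jet_matrix m n k x \<in> carrier_mat m n"
  by (simp add: jet_matrix_def)

lemma jet_matrix_cong:
  assumes "\<And>l i j. l < k \<Longrightarrow> i < m \<Longrightarrow> j < n \<Longrightarrow> x l i j = y l i j"
  shows "jet_matrix m n k x = jet_matrix m n k y"
  using assms by (intro eq_matI) (auto simp: jet_matrix_def)

lemma coeff_minor_jet_matrix_truncate:
  assumes "N \<le> K" "l < N"
  shows "coeff (det (submatrix (jet_matrix m n K x) I J)) l
       = coeff (det (submatrix (jet_matrix m n N x) I J)) l"
  using assms
  by (intro coeff_eq_if_monom_dvd_diff det_submatrix_diff_dvd[OF jet_matrix_carrier jet_matrix_carrier])
    (simp_all add: jet_matrix_def monom_dvd_sum_monom_diff)

lemma jet_matrix_eq_smult_shift: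
  assumes "\<And>i j. i < m \<Longrightarrow> j < n \<Longrightarrow> x 0 i j = 0"
  shows "jet_matrix m n k x = monom 1 1 \<cdot>\<^sub>m jet_matrix m n (k - 1) (\<lambda>l. x (Suc l))"
proof (rule eq_matI)
  fix i j assume "i < dim_row (monom 1 1 \<cdot>\<^sub>m jet_matrix m n (k - 1) (\<lambda>l. x (Suc l)))"
    "j < dim_col (monom 1 1 \<cdot>\<^sub>m jet_matrix m n (k - 1) (\<lambda>l. x (Suc l)))"
  then have ij: "i < m" "j < n" by (simp_all add: jet_matrix_def)
  have "(\<Sum>l<k. monom (x l i j) l) = monom 1 1 * (\<Sum>l<k - 1. monom (x (Suc l) i j) l)"
  proof (cases k)
    case (Suc k')
    then show ?thesis
      using assms ij
      by (simp only: sum.lessThan_Suc_shift) (simp add: sum_distrib_left mult_monom)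
  qed simp
  then show "jet_matrix m n k x $$ (i, j)
      = (monom 1 1 \<cdot>\<^sub>m jet_matrix m n (k - 1) (\<lambda>l. x (Suc l))) $$ (i, j)"
    using ij by (simp add: jet_matrix_def)
qed (simp_all add: jet_matrix_def)

lemma det_submatrix_smult:
  assumes "J \<subseteq> {..<dim_col A}"
  shows "det (submatrix (c \<cdot>\<^sub>m A) I J) = c ^ card J * det (submatrix A I J)"
proof -
  have "submatrix (c \<cdot>\<^sub>m A) I J = c \<cdot>\<^sub>m submatrix A I J"
    by (rule eq_matI) (auto simp: submatrix_index dim_submatrix pick_le)
  moreover have "{j. j < dim_col A \<and> j \<in> J} = J" using assms by auto
  ultimately show ?thesis by (simp add: dim_submatrix)
qed

lemma coeff_minor_jet_matrix_shift:
  assumes x0: "\<And>i j. i < m \<Longrightarrow> j < n \<Longrightarrow> x 0 i j = 0"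
    and y: "\<And>l i j. l < k - r \<Longrightarrow> i < m \<Longrightarrow> j < n \<Longrightarrow> y l i j = x (Suc l) i j"
    and J: "J \<subseteq> {..<n}" "card J = r" and r: "1 \<le> r" and l: "l < k"
  shows "coeff (det (submatrix (jet_matrix m n k x) I J)) l =
    (if l < r then 0 else coeff (det (submatrix (jet_matrix m n (k - r) y) I J)) (l - r))"
proof -
  let ?Y = "jet_matrix m n (k - 1) (\<lambda>l. x (Suc l))"
  have "det (submatrix (jet_matrix m n k x) I J) = det (submatrix (monom 1 1 \<cdot>\<^sub>m ?Y) I J)"
    by (simp only: jet_matrix_eq_smult_shift[of m n x, OF x0])
  also have "\<dots> = monom 1 1 ^ card J * det (submatrix ?Y I J)"
    using J by (intro det_submatrix_smult) (simp add: jet_matrix_def)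
  finally have minor: "det (submatrix (jet_matrix m n k x) I J) = monom 1 r * det (submatrix ?Y I J)"
    using J by (simp add: monom_power)
  show ?thesis
  proof (cases "l < r")
    case True
    then show ?thesis by (simp add: minor coeff_monom_mult)
  next
    case False
    have "coeff (det (submatrix ?Y I J)) (l - r)
        = coeff (det (submatrix (jet_matrix m n (k - r) (\<lambda>l. x (Suc l))) I J)) (l - r)"
      using False r l by (intro coeff_minor_jet_matrix_truncate) auto
    also have "jet_matrix m n (k - r) (\<lambda>l. x (Suc l)) = jet_matrix m n (k - r) y"
      using y by (intro jet_matrix_cong) auto
    finally show ?thesis using False by (simp add: minor coeff_monom_mult)
  qed
qed

lemma Z1_split_mem:
  assumes "x \<in> jet_points m n k"
  shows "Z1_split r k x \<in> jet_points m n (k - r) \<times> coord_space m n {k - r<..k - 1}"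
  using assms by (auto simp: Z1_split_def jet_points_def coord_space_def)

lemma mem_jet_Z1_iff_split:
  fixes x :: "nat \<Rightarrow> nat \<Rightarrow> nat \<Rightarrow> 'a::comm_ring_1"
  assumes "1 \<le> r" and x: "x \<in> jet_points m n k" "\<forall>i<m. \<forall>j<n. x 0 i j = 0"
  shows "x \<in> jet_Z1 m n r k \<longleftrightarrow> fst (Z1_split r k x) \<in> jet_zero_set m n r (k - r)"
proof -
  define y where "y = fst (Z1_split r k x)"
  have y: "y \<in> jet_points m n (k - r)"
    using Z1_split_mem[OF x(1), of r] by (simp add: y_def mem_Times_iff)
  have minor: "coeff (det (submatrix (jet_matrix m n k x) I J)) l =
      (if l < r then 0 else coeff (det (submatrix (jet_matrix m n (k - r) y) I J)) (l - r))"
    if "J \<subseteq> {..<n}" "card J = r" "l < k" for I J l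
    using x(2) that assms by (intro coeff_minor_jet_matrix_shift) (auto simp: y_def Z1_split_def)
  have "x \<in> jet_Z1 m n r k \<longleftrightarrow> y \<in> jet_zero_set m n r (k - r)"
  proof
    assume "x \<in> jet_Z1 m n r k"
    then have x_minors: "coeff (det (submatrix (jet_matrix m n k x) I J)) l = 0"
      if "I \<subseteq> {..<m}" "J \<subseteq> {..<n}" "card I = r" "card J = r" "l < k" for I J l
      using that by (simp add: jet_Z1_def jet_zero_set_def)
    show "y \<in> jet_zero_set m n r (k - r)"
      unfolding jet_zero_set_def
    proof (intro CollectI conjI y allI impI)
      fix I J l
      assume "I \<subseteq> {..<m}" "J \<subseteq> {..<n}" "card I = r" "card J = r" "l < k - r"
      then show "coeff (det (submatrix (jet_matrix m n (k - r) y) I J)) l = 0"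
        using minor[of J "l + r" I] x_minors[of I J "l + r"] by simp
    qed
  next
    assume "y \<in> jet_zero_set m n r (k - r)"
    then have y_minors: "coeff (det (submatrix (jet_matrix m n (k - r) y) I J)) l = 0"
      if "I \<subseteq> {..<m}" "J \<subseteq> {..<n}" "card I = r" "card J = r" "l < k - r" for I J l
      using that by (simp add: jet_zero_set_def)
    show "x \<in> jet_Z1 m n r k"
      unfolding jet_Z1_def jet_zero_set_def
    proof (intro CollectI conjI x allI impI)
      fix I J l
      assume "I \<subseteq> {..<m}" "J \<subseteq> {..<n}" "card I = r" "card J = r" "l < k"
      then show "coeff (det (submatrix (jet_matrix m n k x) I J)) l = 0"
        using minor[of J l I] y_minors[of I J "l - r"] by simp
    qed
  qed
  then show ?thesis by (simp add: y_def)
qed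

lemma jet_Z1_eq_split:
  assumes "1 \<le> r"
  shows "(jet_Z1 m n r k :: (nat \<Rightarrow> nat \<Rightarrow> nat \<Rightarrow> 'a::comm_ring_1) set)
           = {x \<in> jet_points m n k. (\<forall>i<m. \<forall>j<n. x 0 i j = 0)
           \<and> fst (Z1_split r k x) \<in> jet_zero_set m n r (k - r)}"
proof -
  have "x \<in> jet_points m n k \<and> (\<forall>i<m. \<forall>j<n. x 0 i j = 0)" if "x \<in> jet_Z1 m n r k" for x
    using that by (simp add: jet_Z1_def jet_zero_set_def)
  then show ?thesis using mem_jet_Z1_iff_split[OF assms] by blast
qed

definition Z1_join :: "nat \<Rightarrow> nat \<Rightarrow> (nat \<Rightarrow> nat \<Rightarrow> nat \<Rightarrow> 'a::zero) \<times> (nat \<Rightarrow> nat \<Rightarrow> nat \<Rightarrow> 'a)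
    \<Rightarrow> (nat \<Rightarrow> nat \<Rightarrow> nat \<Rightarrow> 'a)" where
  "Z1_join r k yz = (\<lambda>l i j. if l = 0 then 0 else if l \<le> k - r then fst yz (l - 1) i j else snd yz l i j)"

lemma Z1_join_mem:
  assumes "1 \<le> r" "r < k" "yz \<in> jet_points m n (k - r) \<times> coord_space m n {k - r<..k - 1}"
  shows "Z1_join r k yz \<in> jet_points m n k"
  using assms by (force simp: Z1_join_def jet_points_def coord_space_def)

lemma Z1_join_split:
  assumes "x \<in> jet_points m n k" "\<forall>i<m. \<forall>j<n. x 0 i j = 0"
  shows "Z1_join r k (Z1_split r k x) = x"
  using assms by (fastforce simp: Z1_join_def Z1_split_def jet_points_def)

lemma Z1_split_join:
  assumes "yz \<in> jet_points m n (k - r) \<times> coord_space m n {k - r<..k - 1}"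
  shows "Z1_split r k (Z1_join r k yz) = yz"
  using assms by (cases yz) (fastforce simp: Z1_join_def Z1_split_def jet_points_def coord_space_def)

theorem lemma2p1:
  fixes m n r k :: nat
  assumes alg_closed: "\<forall>p :: 'a::field poly. degree p \<ge> 1 \<longrightarrow> (\<exists>z. poly p z = 0)"
    and "1 \<le> r" "r \<le> m" "m \<le> n" "1 \<le> k"
  shows "(k \<le> r \<longrightarrow>
            (jet_Z1 m n r k :: (nat \<Rightarrow> nat \<Rightarrow> nat \<Rightarrow> 'a) set)
              = {x \<in> jet_points m n k. \<forall>i<m. \<forall>j<n. x 0 i j = 0})
       \<and> (k > r \<longrightarrow>
            bij_betw (Z1_split r k) (jet_Z1 m n r k :: (nat \<Rightarrow> nat \<Rightarrow> nat \<Rightarrow> 'a) set)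
              (jet_zero_set m n r (k - r) \<times> coord_space m n {k - r <.. k - 1}))"
proof (intro conjI impI)
  assume "k \<le> r"
  then show "jet_Z1 m n r k = {x \<in> jet_points m n k. \<forall>i<m. \<forall>j<n. x 0 i j = 0}"
    using assms(2) by (simp add: jet_Z1_eq_split Z1_split_def jet_zero_set_def jet_points_def)
next
  assume "r < k"
  let ?B = "jet_zero_set m n r (k - r) \<times> (coord_space m n {k - r<..k - 1} :: (nat \<Rightarrow> nat \<Rightarrow> nat \<Rightarrow> 'a) set)"
  have B_points: "?B \<subseteq> jet_points m n (k - r) \<times> coord_space m n {k - r<..k - 1}"
    by (auto simp: jet_zero_set_def)
  show "bij_betw (Z1_split r k) (jet_Z1 m n r k) ?B"
  proof (rule bij_betwI[where g = "Z1_join r k"])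
    show "Z1_split r k \<in> jet_Z1 m n r k \<rightarrow> ?B"
      using Z1_split_mem by (fastforce simp: jet_Z1_eq_split[OF assms(2)] mem_Times_iff)
    show "Z1_join r k \<in> ?B \<rightarrow> jet_Z1 m n r k"
      using B_points Z1_join_mem[OF assms(2) \<open>r < k\<close>] Z1_split_join
      by (fastforce simp: jet_Z1_eq_split[OF assms(2)] Z1_join_def)
  qed (use B_points in \<open>auto simp: jet_Z1_eq_split[OF assms(2)] Z1_join_split Z1_split_join\<close>)
qed

end
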